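(* Let $f : \mathbb{R}^{n_1} \times \mathbb{R}^{n_2} \to \mathbb{R}^{n_3}$, $(u,v) \mapsto u*v$, be a bilinear map and let $q \in \mathbb{Z}_{\geq 0}$. The following are equivalent: (1) $Q(f) \leq q$; (2) for every integer $r \geq q$ and all $u_1,\ldots,u_r \in \mathbb{R}^{n_1}$, $v_1,\ldots,v_r \in \mathbb{R}^{n_2}$, setting \[ R := \{ \alpha \in \mathbb{R}^{[r]\times[r]} \mid \textstyle\sum_{i,j} \alpha_{ij}\, u_i * v_j = 0 \} \] and $\pi : \mathbb{R}^{[r]\times[r]} \to \mathbb{R}^r$, $\alpha \mapsto (\alpha_{11},\ldots,\alpha_{rr})$, we have $\dim \pi(R) \geq r - q$.
   Context: $[r] = \{1,\ldots,r\}$. For a bilinear map $f : \mathbb{R}^{n_1} \times \mathbb{R}^{n_2} \to \mathbb{R}^{n_3}$, its subrank $Q(f)$ is the largest $r$ such that there exist linear maps $\varphi_1 : \mathbb{R}^r \to \mathbb{R}^{n_1}$, $\varphi_2 : \mathbb{R}^r \to \mathbb{R}^{n_2}$, $\varphi_3 : \mathbb{R}^{n_3} \to \mathbb{R}^r$ with $\varphi_3(f(\varphi_1(a), \varphi_2(b))) = (a_1b_1,\ldots,a_rb_r)$ for all $a,b \in \mathbb{R}^r$. *)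

theory Defs
  imports "HOL-Analysis.Analysis" "HOL-Library.Function_Algebras"
begin

text \<open>Vectors of R^r are represented as functions nat => real (only the
coordinates i < r matter).\<close>

definition fscale :: "real \<Rightarrow> (nat \<Rightarrow> real) \<Rightarrow> (nat \<Rightarrow> real)" where
  "fscale c x = (\<lambda>i. c * x i)"

lemma vector_space_fscale: "vector_space fscale"
  by unfold_locales (auto simp: fscale_def fun_eq_iff algebra_simps)

definition fdim :: "(nat \<Rightarrow> real) set \<Rightarrow> nat" where
  "fdim S = vector_space.dim fscale S"

text \<open>A subrank witness of size r for the bilinear map f: linear maps
phi1 : R^r -> R^n1, a |-> sum_{i<r} a_i w1_i (every linear map from R^r has this form),
phi2 : R^r -> R^n2, b |-> sum_{i<r} b_i w2_i,
phi3 : R^n3 -> R^r, z |-> (L_0 z, ..., L_{r-1} z) with each L_i linear,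
such that phi3 (f (phi1 a) (phi2 b)) = (a_i b_i)_{i<r} for all a, b in R^r.\<close>

definition subrank_witness ::
  "(real^'a \<Rightarrow> real^'b \<Rightarrow> real^'c) \<Rightarrow> nat \<Rightarrow> bool" where
  "subrank_witness f r \<longleftrightarrow>
     (\<exists>(w1 :: nat \<Rightarrow> real^'a) (w2 :: nat \<Rightarrow> real^'b) (L :: nat \<Rightarrow> real^'c \<Rightarrow> real).
        (\<forall>i<r. linear (L i)) \<and>
        (\<forall>a b :: nat \<Rightarrow> real. \<forall>k<r.
           L k (f (\<Sum>i<r. a i *\<^sub>R w1 i) (\<Sum>j<r. b j *\<^sub>R w2 j)) = a k * b k))"

definition subrank :: "(real^'a \<Rightarrow> real^'b \<Rightarrow> real^'c) \<Rightarrow> nat" where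
  "subrank f = Max {r. subrank_witness f r}"

end

theory Submission
  imports Defs
begin

(*
  For (1) ==> (2), let P = pi(R). Extending a basis of P by unit vectors gives a set S of at
  least r - dim P coordinates on which no nonzero element of P is supported. Then no relation
  supported on S x S has a nonzero diagonal entry, so each f(u_k, v_k), k in S, lies outside the
  span of the other f(u_i, v_j), i, j in S. Vectors orthogonal to these spans give functionals
  L_k with L_k(f(u_i, v_j)) = [i = j = k], i.e. a subrank witness of size |S| >= r - dim P.
  For (2) ==> (1), applying L_k to a relation among the vectors of a witness of size Q(f) kills
  its k-th diagonal entry, so pi(R) = 0 and (2) forces Q(f) <= q.
*)

lemma (in vector_space) span_Int_span_Diff:
  assumes B: "independent B" "finite B" and "A \<subseteq> B"
  shows "span A \<inter> span (B - A) = {0}"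
proof (intro subset_antisym subsetI)
  fix x assume "x \<in> span A \<inter> span (B - A)"
  then obtain c d where c: "x = (\<Sum>v\<in>A. scale (c v) v)" and d: "x = (\<Sum>v\<in>B - A. scale (d v) v)"
    using span_finite[of A] span_finite[of "B - A"] B(2) \<open>A \<subseteq> B\<close> finite_subset by blast
  define w where "w v = (if v \<in> A then c v else - d v)" for v
  have "(\<Sum>v\<in>B. scale (w v) v) = (\<Sum>v\<in>A. scale (w v) v) + (\<Sum>v\<in>B - A. scale (w v) v)"
    using sum.subset_diff[OF \<open>A \<subseteq> B\<close> B(2)] by (simp add: add.commute)
  also have "(\<Sum>v\<in>A. scale (w v) v) = x" unfolding c w_def by simp
  also have "(\<Sum>v\<in>B - A. scale (w v) v) = - x" unfolding d w_def by (simp add: scale_minus_left sum_negf)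
  finally have "\<forall>v\<in>A. c v = 0"
    using independentD[OF B(1) B(2) subset_refl] \<open>A \<subseteq> B\<close> by (force simp: w_def)
  then show "x \<in> {0}" unfolding c by simp
qed (simp add: span_zero)

lemma (in vector_space) independent_complement_exists:
  assumes E: "finite E" "independent E" and V: "V \<subseteq> span E"
  obtains E' where "E' \<subseteq> E" "card E \<le> card E' + dim V" "span V \<inter> span E' = {0}"
proof -
  obtain B0 where B0: "B0 \<subseteq> V" "independent B0" "V \<subseteq> span B0" "card B0 = dim V"
    using basis_exists by blast
  obtain B where B: "B0 \<subseteq> B" "B \<subseteq> B0 \<union> E" "independent B" "B0 \<union> E \<subseteq> span B"
    using maximal_independent_subset_extend[of B0 "B0 \<union> E"] B0(2) by blast
  have "finite B0" using independent_span_bound[OF E(1) B0(2)] B0(1) V by blast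
  then have "finite B" using B(2) E(1) finite_subset by blast
  show thesis
  proof
    show "B - B0 \<subseteq> E" using B(2) by blast
    have "card E \<le> card B" using independent_span_bound[OF \<open>finite B\<close> E(2)] B(4) by blast
    also have "\<dots> = card (B - B0) + dim V"
      using card_Diff_subset[OF \<open>finite B0\<close> B(1)] card_mono[OF \<open>finite B\<close> B(1)] B0(4) by simp
    finally show "card E \<le> card (B - B0) + dim V" .
    have "span V = span B0" using B0(1,3) by (simp add: span_eq span_superset subset_trans)
    then show "span V \<inter> span (B - B0) = {0}"
      using span_Int_span_Diff[OF B(3) \<open>finite B\<close> B(1)] by simp
  qed
qed

interpretation fspace: vector_space fscale
  by (rule vector_space_fscale)

lemma sum_fun_apply: "(\<Sum>i\<in>T. g i) x = (\<Sum>i\<in>T. g i x :: 'a::comm_monoid_add)"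
  by (induction T rule: infinite_finite_induct) auto

definition unit_fun :: "nat \<Rightarrow> nat \<Rightarrow> real" where
  "unit_fun i = (\<lambda>j. if j = i then 1 else 0)"

lemma inj_unit_fun: "inj unit_fun"
  by (rule injI) (metis unit_fun_def zero_neq_one)

lemma in_span_unit_funs:
  assumes "finite T" "\<And>i. i \<notin> T \<Longrightarrow> x i = 0"
  shows "x \<in> fspace.span (unit_fun ` T)"
proof -
  have "(\<Sum>i\<in>T. fscale (x i) (unit_fun i)) j = (\<Sum>i\<in>T. if j = i then x i else 0)" for j
    by (simp add: sum_fun_apply fscale_def unit_fun_def if_distrib cong: if_cong)
  then have "x = (\<Sum>i\<in>T. fscale (x i) (unit_fun i))"
    using assms by (auto simp: fun_eq_iff)
  also have "\<dots> \<in> fspace.span (unit_fun ` T)"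
    by (intro fspace.span_sum fspace.span_scale fspace.span_base) auto
  finally show ?thesis .
qed

lemma independent_unit_funs:
  assumes "finite T"
  shows "fspace.independent (unit_fun ` T)"
proof (rule fspace.independent_if_scalars_zero)
  fix c x assume sum0: "(\<Sum>y\<in>unit_fun ` T. fscale (c y) y) = 0" and "x \<in> unit_fun ` T"
  then obtain i where "i \<in> T" and x: "x = unit_fun i" by blast
  have "0 = (\<Sum>j\<in>T. fscale (c (unit_fun j)) (unit_fun j)) i"
    using sum0 by (simp add: sum.reindex inj_on_subset[OF inj_unit_fun])
  also have "\<dots> = (\<Sum>j\<in>T. if i = j then c (unit_fun j) else 0)"
    by (simp add: sum_fun_apply fscale_def unit_fun_def if_distrib cong: if_cong)
  finally show "c x = 0" using \<open>i \<in> T\<close> assms x by simp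
qed (use assms in simp)

lemma coordinate_complement_exists:
  assumes "\<forall>x\<in>P. \<forall>i\<ge>r. x i = 0"
  obtains S where "S \<subseteq> {..<r}" "r \<le> card S + fdim P"
    "\<And>x. x \<in> P \<Longrightarrow> (\<And>i. i \<notin> S \<Longrightarrow> x i = 0) \<Longrightarrow> x = 0"
proof -
  have P_span: "P \<subseteq> fspace.span (unit_fun ` {..<r})"
  proof
    fix x assume "x \<in> P"
    then show "x \<in> fspace.span (unit_fun ` {..<r})"
      using assms by (intro in_span_unit_funs) auto
  qed
  obtain E' where E': "E' \<subseteq> unit_fun ` {..<r}" "card (unit_fun ` {..<r}) \<le> card E' + fdim P"
    "fspace.span P \<inter> fspace.span E' = {0}"
    unfolding fdim_def
    by (rule fspace.independent_complement_exists[OF _ independent_unit_funs P_span]) simp_all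
  define S where "S = {i. i < r \<and> unit_fun i \<in> E'}"
  have E'_eq: "E' = unit_fun ` S" using E'(1) unfolding S_def by auto
  show thesis
  proof
    show "S \<subseteq> {..<r}" unfolding S_def by auto
    show "r \<le> card S + fdim P"
      using E'(2) card_image[OF inj_on_subset[OF inj_unit_fun subset_UNIV]] unfolding E'_eq by simp
    fix x assume "x \<in> P" and "\<And>i. i \<notin> S \<Longrightarrow> x i = 0"
    moreover have "finite S" unfolding S_def by simp
    ultimately have "x \<in> fspace.span P \<inter> fspace.span E'"
      unfolding E'_eq by (simp add: in_span_unit_funs fspace.span_base)
    then show "x = 0" using E'(3) by blast
  qed
qed

lemma span_image_eq_range_sum:
  fixes h :: "'i \<Rightarrow> 'a::real_vector"
  assumes "finite I"
  shows "span (h ` I) = range (\<lambda>c. \<Sum>p\<in>I. c p *\<^sub>R h p)" (is "_ = ?R")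
proof
  show "?R \<subseteq> span (h ` I)"
    by (auto intro!: span_sum span_scale intro: span_base)
  have in_R: "(\<Sum>p\<in>I. c p *\<^sub>R h p) \<in> ?R" for c
    by (rule rangeI)
  show "span (h ` I) \<subseteq> ?R"
  proof (rule span_minimal)
    show "h ` I \<subseteq> ?R"
    proof
      fix x assume "x \<in> h ` I"
      then obtain p0 where "p0 \<in> I" "x = h p0" by blast
      then show "x \<in> ?R"
        using assms in_R[of "\<lambda>p. if p = p0 then 1 else 0"]
        by (simp add: if_distrib[of "\<lambda>c. c *\<^sub>R _"] cong: if_cong)
    qed
    show "subspace ?R"
      unfolding subspace_def
    proof (intro conjI ballI allI)
      show "0 \<in> ?R" using in_R[of "\<lambda>_. 0"] by simp
      fix x y a assume "x \<in> ?R" "y \<in> ?R"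
      then obtain c d where "x = (\<Sum>p\<in>I. c p *\<^sub>R h p)" "y = (\<Sum>p\<in>I. d p *\<^sub>R h p)" by blast
      then show "x + y \<in> ?R" and "a *\<^sub>R x \<in> ?R"
        using in_R[of "\<lambda>p. c p + d p"] in_R[of "\<lambda>p. a * c p"]
        by (simp_all add: sum.distrib scaleR_add_left scaleR_sum_right)
    qed
  qed
qed

lemma dual_vector_not_in_span:
  fixes x :: "'a::euclidean_space"
  assumes "x \<notin> span W"
  obtains z where "z \<bullet> x = 1" "\<And>w. w \<in> W \<Longrightarrow> z \<bullet> w = 0"
proof -
  obtain y z where y: "y \<in> span W" and z: "\<And>w. w \<in> span W \<Longrightarrow> orthogonal z w" and x: "x = y + z"
    using orthogonal_subspace_decomp_exists by blast
  have "z \<noteq> 0" using assms x y by auto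
  have "z \<bullet> x = z \<bullet> z" using z[OF y] x by (simp add: orthogonal_def inner_add_right)
  show thesis
  proof
    show "(z /\<^sub>R (z \<bullet> z)) \<bullet> x = 1" using \<open>z \<bullet> x = z \<bullet> z\<close> \<open>z \<noteq> 0\<close> by simp
    show "(z /\<^sub>R (z \<bullet> z)) \<bullet> w = 0" if "w \<in> W" for w
      using z[OF span_base[OF that]] by (simp add: orthogonal_def)
  qed
qed

definition unit_tensor_restriction ::
  "('x \<Rightarrow> 'y \<Rightarrow> 'z::real_vector) \<Rightarrow> nat \<Rightarrow> (nat \<Rightarrow> 'x) \<Rightarrow> (nat \<Rightarrow> 'y) \<Rightarrow> (nat \<Rightarrow> 'z \<Rightarrow> real) \<Rightarrow> bool"
  where "unit_tensor_restriction f r w1 w2 L \<longleftrightarrow>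
    (\<forall>k<r. linear (L k)) \<and>
    (\<forall>i<r. \<forall>j<r. \<forall>k<r. L k (f (w1 i) (w2 j)) = (if i = k \<and> j = k then 1 else 0))"

lemma unit_tensor_restriction_if_subrank_witness:
  assumes "subrank_witness f r"
  obtains w1 w2 L where "unit_tensor_restriction f r w1 w2 L"
proof -
  obtain w1 w2 L where lin: "\<forall>k<r. linear (L k)" and
    W: "\<And>a b k. k < r \<Longrightarrow> L k (f (\<Sum>i<r. a i *\<^sub>R w1 i) (\<Sum>j<r. b j *\<^sub>R w2 j)) = a k * b k"
    using assms unfolding subrank_witness_def by blast
  have unit_sum: "(\<Sum>i'<r. (if i' = i then 1 else 0) *\<^sub>R w i') = w i"
    if "i < r" for i and w :: "nat \<Rightarrow> 'v::real_vector"
    using that by (simp add: if_distrib[of "\<lambda>c. c *\<^sub>R _"] cong: if_cong)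
  have "L k (f (w1 i) (w2 j)) = (if i = k \<and> j = k then 1 else 0)" if "i < r" "j < r" "k < r" for i j k
    using W[OF \<open>k < r\<close>, of "\<lambda>i'. if i' = i then 1 else 0" "\<lambda>j'. if j' = j then 1 else 0"]
    by (simp add: unit_sum[OF \<open>i < r\<close>] unit_sum[OF \<open>j < r\<close>])
  with lin show thesis by (intro that[of w1 w2 L]) (simp add: unit_tensor_restriction_def)
qed

lemma subrank_witness_if_unit_tensor_restriction:
  assumes "bilinear f" and "unit_tensor_restriction f r w1 w2 L"
  shows "subrank_witness f r"
  unfolding subrank_witness_def
proof (intro exI[of _ w1] exI[of _ w2] exI[of _ L] conjI allI impI)
  have lin: "\<forall>k<r. linear (L k)"
    and delta: "\<And>i j k. i < r \<Longrightarrow> j < r \<Longrightarrow> k < r \<Longrightarrow> L k (f (w1 i) (w2 j)) = (if i = k \<and> j = k then 1 else 0)"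
    using assms(2) unfolding unit_tensor_restriction_def by blast+
  then show "linear (L k)" if "k < r" for k using that by blast
  fix a b :: "nat \<Rightarrow> real" and k assume "k < r"
  have "L k (f (\<Sum>i<r. a i *\<^sub>R w1 i) (\<Sum>j<r. b j *\<^sub>R w2 j))
      = (\<Sum>(i, j)\<in>{..<r} \<times> {..<r}. a i * b j * L k (f (w1 i) (w2 j)))"
    using lin \<open>k < r\<close>
    by (simp add: bilinear_sum[OF assms(1)] bilinear_lmul[OF assms(1)] bilinear_rmul[OF assms(1)]
        linear_sum linear_cmul case_prod_beta mult_ac)
  also have "\<dots> = (\<Sum>p\<in>{..<r} \<times> {..<r}. if p = (k, k) then a k * b k else 0)"
    using \<open>k < r\<close> by (intro sum.cong) (auto simp: delta split: if_split_asm)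
  also have "\<dots> = a k * b k" using \<open>k < r\<close> by simp
  finally show "L k (f (\<Sum>i<r. a i *\<^sub>R w1 i) (\<Sum>j<r. b j *\<^sub>R w2 j)) = a k * b k" .
qed

lemma unit_tensor_restriction_relation_diag_eq_0:
  assumes "unit_tensor_restriction f r w1 w2 L"
    and "(\<Sum>i<r. \<Sum>j<r. \<alpha> i j *\<^sub>R f (w1 i) (w2 j)) = 0" and "k < r"
  shows "\<alpha> k k = 0"
proof -
  have lin: "linear (L k)"
    and delta: "\<And>i j. i < r \<Longrightarrow> j < r \<Longrightarrow> L k (f (w1 i) (w2 j)) = (if i = k \<and> j = k then 1 else 0)"
    using assms(1,3) unfolding unit_tensor_restriction_def by blast+
  have "0 = L k (\<Sum>i<r. \<Sum>j<r. \<alpha> i j *\<^sub>R f (w1 i) (w2 j))"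
    using assms(2) lin by (simp add: linear_0)
  also have "\<dots> = (\<Sum>i<r. \<Sum>j<r. \<alpha> i j * L k (f (w1 i) (w2 j)))"
    using lin by (simp add: linear_sum linear_cmul)
  also have "\<dots> = (\<Sum>(i, j)\<in>{..<r} \<times> {..<r}. \<alpha> i j * L k (f (w1 i) (w2 j)))"
    by (simp add: sum.cartesian_product)
  also have "\<dots> = (\<Sum>p\<in>{..<r} \<times> {..<r}. if p = (k, k) then \<alpha> k k else 0)"
    by (intro sum.cong) (auto simp: delta split: if_split_asm)
  also have "\<dots> = \<alpha> k k"
    using \<open>k < r\<close> by simp
  finally show ?thesis by simp
qed

lemma subrank_witness_le_CARD:
  fixes f :: "real^'a \<Rightarrow> real^'b \<Rightarrow> real^'c"
  assumes "subrank_witness f r"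
  shows "r \<le> CARD('c)"
proof -
  obtain w1 w2 L where U: "unit_tensor_restriction f r w1 w2 L"
    using assms by (rule unit_tensor_restriction_if_subrank_witness)
  define g where "g k = f (w1 k) (w2 k)" for k
  have delta: "\<And>i j k. i < r \<Longrightarrow> j < r \<Longrightarrow> k < r \<Longrightarrow> L k (f (w1 i) (w2 j)) = (if i = k \<and> j = k then 1 else 0)"
    using U unfolding unit_tensor_restriction_def by blast
  have "inj_on g {..<r}"
  proof (rule inj_onI)
    fix i j assume "i \<in> {..<r}" "j \<in> {..<r}" "g i = g j"
    then show "i = j" using delta[of i i j] delta[of j j j] by (auto simp: g_def split: if_splits)
  qed
  have "independent (g ` {..<r})"
  proof (rule independent_if_scalars_zero)
    fix c x assume sum0: "(\<Sum>y\<in>g ` {..<r}. c y *\<^sub>R y) = 0" and "x \<in> g ` {..<r}"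
    then obtain k where "k < r" "x = g k" by blast
    have "(\<Sum>i<r. \<Sum>j<r. (if i = j then c (g i) else 0) *\<^sub>R f (w1 i) (w2 j)) = (\<Sum>i<r. c (g i) *\<^sub>R g i)"
      by (intro sum.cong refl) (simp add: g_def if_distrib[of "\<lambda>c. c *\<^sub>R _"] cong: if_cong)
    also have "\<dots> = 0"
      using sum0 by (simp add: sum.reindex[OF \<open>inj_on g {..<r}\<close>])
    finally have "(\<Sum>i<r. \<Sum>j<r. (if i = j then c (g i) else 0) *\<^sub>R f (w1 i) (w2 j)) = 0" .
    from unit_tensor_restriction_relation_diag_eq_0[OF U this \<open>k < r\<close>]
    show "c x = 0" using \<open>x = g k\<close> by simp
  qed simp
  then have "card (g ` {..<r}) \<le> DIM(real^'c)" by (rule independent_card_le)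
  with \<open>inj_on g {..<r}\<close> show ?thesis by (simp add: card_image)
qed

lemma finite_subrank_witness: "finite {r. subrank_witness f r}"
  by (rule finite_subset[of _ "{..CARD('c)}"]) (auto dest: subrank_witness_le_CARD)

lemma le_subrank: "subrank_witness f r \<Longrightarrow> r \<le> subrank f"
  unfolding subrank_def by (rule Max_ge[OF finite_subrank_witness]) simp

lemma subrank_witness_subrank: "subrank_witness f (subrank f)"
proof -
  have "subrank_witness f 0" unfolding subrank_witness_def by simp
  then show ?thesis unfolding subrank_def using Max_in[OF finite_subrank_witness] by blast
qed

lemma diagonal_not_in_span_if_relations_vanish:
  fixes g :: "'i \<Rightarrow> 'i \<Rightarrow> 'a::real_vector"
  assumes "finite S" "k \<in> S"
    and vanish: "\<And>\<alpha>. (\<Sum>i\<in>S. \<Sum>j\<in>S. \<alpha> i j *\<^sub>R g i j) = 0 \<Longrightarrow> \<alpha> k k = 0"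
  shows "g k k \<notin> span ((\<lambda>(i, j). g i j) ` (S \<times> S - {(k, k)}))"
proof
  let ?I = "S \<times> S - {(k, k)}"
  assume "g k k \<in> span ((\<lambda>(i, j). g i j) ` ?I)"
  then obtain c where c: "g k k = (\<Sum>p\<in>?I. c p *\<^sub>R (\<lambda>(i, j). g i j) p)"
    using span_image_eq_range_sum[of ?I] \<open>finite S\<close> by auto
  define \<alpha> where "\<alpha> i j = (if (i, j) = (k, k) then -1 else c (i, j))" for i j
  have "(\<Sum>i\<in>S. \<Sum>j\<in>S. \<alpha> i j *\<^sub>R g i j) = (\<Sum>(i, j)\<in>S \<times> S. \<alpha> i j *\<^sub>R g i j)"
    by (simp add: sum.cartesian_product)
  also have "\<dots> = \<alpha> k k *\<^sub>R g k k + (\<Sum>(i, j)\<in>?I. \<alpha> i j *\<^sub>R g i j)"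
    using assms(1,2) by (simp add: sum.remove[of _ "(k, k)"])
  also have "(\<Sum>(i, j)\<in>?I. \<alpha> i j *\<^sub>R g i j) = g k k"
    unfolding c by (intro sum.cong) (auto simp: \<alpha>_def split: if_split_asm)
  finally have "(\<Sum>i\<in>S. \<Sum>j\<in>S. \<alpha> i j *\<^sub>R g i j) = 0" by (simp add: \<alpha>_def)
  with vanish have "\<alpha> k k = 0" .
  then show False by (simp add: \<alpha>_def)
qed

lemma subrank_witness_if_diagonal_not_in_span:
  fixes f :: "real^'a \<Rightarrow> real^'b \<Rightarrow> real^'c"
  assumes "bilinear f" "finite S"
    and not_in_span: "\<And>k. k \<in> S \<Longrightarrow> f (u k) (v k) \<notin> span ((\<lambda>(i, j). f (u i) (v j)) ` (S \<times> S - {(k, k)}))"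
  shows "subrank_witness f (card S)"
proof -
  have "\<exists>z. \<forall>i\<in>S. \<forall>j\<in>S. z \<bullet> f (u i) (v j) = (if i = k \<and> j = k then 1 else 0)" if k: "k \<in> S" for k
  proof -
    obtain z where "z \<bullet> f (u k) (v k) = 1"
      and "\<And>w. w \<in> (\<lambda>(i, j). f (u i) (v j)) ` (S \<times> S - {(k, k)}) \<Longrightarrow> z \<bullet> w = 0"
      using dual_vector_not_in_span[OF not_in_span[OF k]] by blast
    then show ?thesis by (intro exI[of _ z]) force
  qed
  then obtain Z where Z: "\<And>i j k. i \<in> S \<Longrightarrow> j \<in> S \<Longrightarrow> k \<in> S \<Longrightarrow>
      Z k \<bullet> f (u i) (v j) = (if i = k \<and> j = k then 1 else 0)"
    by metis
  obtain \<sigma> where \<sigma>: "bij_betw \<sigma> {..<card S} S"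
    using ex_bij_betw_nat_finite[OF \<open>finite S\<close>] by (auto simp: atLeast0LessThan)
  have "unit_tensor_restriction f (card S) (u \<circ> \<sigma>) (v \<circ> \<sigma>) (\<lambda>k x. Z (\<sigma> k) \<bullet> x)"
    unfolding unit_tensor_restriction_def
  proof (intro conjI allI impI)
    show "linear (\<lambda>x. Z (\<sigma> k) \<bullet> x)" for k
      by (simp add: bounded_linear.linear bounded_linear_inner_right)
    have \<sigma>_in: "\<sigma> i \<in> S" if "i < card S" for i
      using \<sigma> that by (auto dest: bij_betwE)
    have \<sigma>_eq: "\<sigma> i = \<sigma> k \<longleftrightarrow> i = k" if "i < card S" "k < card S" for i k
      using inj_on_eq_iff[OF bij_betw_imp_inj_on[OF \<sigma>]] that by simp
    fix i j k assume "i < card S" "j < card S" "k < card S"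
    then show "Z (\<sigma> k) \<bullet> f ((u \<circ> \<sigma>) i) ((v \<circ> \<sigma>) j) = (if i = k \<and> j = k then 1 else 0)"
      using Z[OF \<sigma>_in \<sigma>_in \<sigma>_in] \<sigma>_eq by simp
  qed
  with \<open>bilinear f\<close> show ?thesis by (rule subrank_witness_if_unit_tensor_restriction)
qed

definition relation_diagonals ::
  "('x \<Rightarrow> 'y \<Rightarrow> 'z::real_vector) \<Rightarrow> nat \<Rightarrow> (nat \<Rightarrow> 'x) \<Rightarrow> (nat \<Rightarrow> 'y) \<Rightarrow> (nat \<Rightarrow> real) set"
  where "relation_diagonals f r u v =
    (\<lambda>\<alpha>. \<lambda>i. if i < r then \<alpha> i i else 0) `
      {\<alpha>. (\<forall>i j. (r \<le> i \<or> r \<le> j) \<longrightarrow> \<alpha> i j = 0) \<and> (\<Sum>i<r. \<Sum>j<r. \<alpha> i j *\<^sub>R f (u i) (v j)) = 0}"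

lemma le_subrank_add_fdim_relation_diagonals:
  fixes f :: "real^'a \<Rightarrow> real^'b \<Rightarrow> real^'c"
  assumes "bilinear f"
  shows "r \<le> subrank f + fdim (relation_diagonals f r u v)"
proof -
  let ?P = "relation_diagonals f r u v"
  have supp: "\<forall>x\<in>?P. \<forall>i\<ge>r. x i = 0" by (auto simp: relation_diagonals_def)
  obtain S where S: "S \<subseteq> {..<r}" "r \<le> card S + fdim ?P"
    and trivial_on_S: "\<And>x. x \<in> ?P \<Longrightarrow> (\<And>i. i \<notin> S \<Longrightarrow> x i = 0) \<Longrightarrow> x = 0"
    using coordinate_complement_exists[OF supp] by blast
  have "finite S" using S(1) finite_subset by blast
  have "f (u k) (v k) \<notin> span ((\<lambda>(i, j). f (u i) (v j)) ` (S \<times> S - {(k, k)}))" if "k \<in> S" for k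
  proof (rule diagonal_not_in_span_if_relations_vanish[OF \<open>finite S\<close> that])
    fix \<alpha> assume rel: "(\<Sum>i\<in>S. \<Sum>j\<in>S. \<alpha> i j *\<^sub>R f (u i) (v j)) = 0"
    define \<beta> where "\<beta> i j = (if i \<in> S \<and> j \<in> S then \<alpha> i j else 0)" for i j
    have "(\<Sum>i<r. \<Sum>j<r. \<beta> i j *\<^sub>R f (u i) (v j)) = (\<Sum>i\<in>S. \<Sum>j\<in>S. \<alpha> i j *\<^sub>R f (u i) (v j))"
      using S(1) by (intro sum.mono_neutral_cong_right) (auto simp: \<beta>_def)
    with rel S(1) have "(\<lambda>i. if i < r then \<beta> i i else 0) \<in> ?P"
      unfolding relation_diagonals_def by (intro imageI) (auto simp: \<beta>_def)
    then have "(\<lambda>i. if i < r then \<beta> i i else 0) = 0"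
      by (rule trivial_on_S) (simp add: \<beta>_def)
    then show "\<alpha> k k = 0"
      using that S(1) by (auto simp: \<beta>_def fun_eq_iff dest!: spec[of _ k])
  qed
  then have "subrank_witness f (card S)"
    by (rule subrank_witness_if_diagonal_not_in_span[OF assms \<open>finite S\<close>])
  then have "card S \<le> subrank f" by (rule le_subrank)
  with S(2) show ?thesis by linarith
qed

lemma fdim_relation_diagonals_eq_0:
  assumes "unit_tensor_restriction f r w1 w2 L"
  shows "fdim (relation_diagonals f r w1 w2) = 0"
proof -
  have "relation_diagonals f r w1 w2 \<subseteq> fspace.span {}"
    using unit_tensor_restriction_relation_diag_eq_0[OF assms]
    by (auto simp: relation_diagonals_def fspace.span_empty fun_eq_iff)
  then show ?thesis
    using fspace.dim_le_card[of _ "{}"] unfolding fdim_def by fastforce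
qed

theorem lemma5p2:
  fixes f :: "real^'a \<Rightarrow> real^'b \<Rightarrow> real^'c" and q :: nat
  assumes "bilinear f"
  shows "subrank f \<le> q \<longleftrightarrow>
    (\<forall>r\<ge>q. \<forall>(u :: nat \<Rightarrow> real^'a) (v :: nat \<Rightarrow> real^'b).
       fdim ((\<lambda>\<alpha>. \<lambda>i. if i < r then \<alpha> i i else 0) `
             {\<alpha> :: nat \<Rightarrow> nat \<Rightarrow> real.
                (\<forall>i j. (r \<le> i \<or> r \<le> j) \<longrightarrow> \<alpha> i j = 0) \<and>
                (\<Sum>i<r. \<Sum>j<r. \<alpha> i j *\<^sub>R f (u i) (v j)) = 0})
       \<ge> r - q)"
  unfolding relation_diagonals_def[symmetric]
proof
  assume "subrank f \<le> q"
  show "\<forall>r\<ge>q. \<forall>u v. r - q \<le> fdim (relation_diagonals f r u v)"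
  proof (intro allI impI)
    fix r u v
    have "r \<le> subrank f + fdim (relation_diagonals f r u v)"
      using assms by (rule le_subrank_add_fdim_relation_diagonals)
    with \<open>subrank f \<le> q\<close> show "r - q \<le> fdim (relation_diagonals f r u v)" by linarith
  qed
next
  assume *: "\<forall>r\<ge>q. \<forall>u v. r - q \<le> fdim (relation_diagonals f r u v)"
  obtain w1 w2 L where "unit_tensor_restriction f (subrank f) w1 w2 L"
    using subrank_witness_subrank by (rule unit_tensor_restriction_if_subrank_witness)
  then have "fdim (relation_diagonals f (subrank f) w1 w2) = 0"
    by (rule fdim_relation_diagonals_eq_0)
  with *[rule_format, of "subrank f" w1 w2] show "subrank f \<le> q" by linarith
qed

end
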